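(* Let $(C,\mathfrak p,\mathfrak d)$ be a regular $q$-cycle coalgebra with $\mathfrak p_{11}^1\ne0$. Then $\mathfrak d_{b1}^c=\mathfrak p_{b1}^c$ for all $b,c\in\{0,\dots,n-1\}$.
   Context: $K$ is an algebraically closed field of characteristic $0$ and $n\ge2$. $C$ is the coalgebra dual to $K[y]/\langle y^n\rangle$: basis $x_0,\dots,x_{n-1}$, $\Delta(x_i)=\sum_{j+k=i}x_j\otimes x_k$, $\epsilon(x_i)=\delta_{i0}$; $C\otimes C$ has the tensor product coalgebra structure; Sweedler notation $\Delta(b)=b_{(1)}\otimes b_{(2)}$. For linear maps $\mathfrak p,\mathfrak d\colon C\otimes C\to C$ write $a\cdot b=\mathfrak p(a\otimes b)$, $a:b=\mathfrak d(a\otimes b)$, $\mathfrak p(x_i\otimes x_j)=\sum_{k=0}^{n-1}\mathfrak p_{ij}^kx_k$, $\mathfrak d(x_i\otimes x_j)=\sum_{k=0}^{n-1}\mathfrak d_{ij}^kx_k$. A triple $(C,\mathfrak p,\mathfrak d)$ with $\mathfrak p,\mathfrak d$ coalgebra morphisms is a regular $q$-magma coalgebra if there are coalgebra morphisms $a\otimes b\mapsto a^b$, $a\otimes b\mapsto a_b$ from $C\otimes C$ to $C$ with $a^{b_{(1)}}\cdot b_{(2)}=(a\cdot b_{(1)})^{b_{(2)}}=\epsilon(b)a$ and $(a:b_{(2)})_{b_{(1)}}=a_{b_{(2)}}:b_{(1)}=\epsilon(b)a$. It is a regular $q$-cycle coalgebra if moreover for all $a,b,c$: (1) $(a\cdot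 b_{(1)})\cdot(c:b_{(2)})=(a\cdot c_{(2)})\cdot(b\cdot c_{(1)})$; (2) $(a\cdot b_{(1)}):(c\cdot b_{(2)})=(a:c_{(2)})\cdot(b:c_{(1)})$; (3) $(a:b_{(1)}):(c:b_{(2)})=(a:c_{(2)}):(b\cdot c_{(1)})$. *)

theory Defs
  imports "HOL-Computational_Algebra.Polynomial"
begin

definition alg_closed :: "'a::field itself \<Rightarrow> bool" where
  "alg_closed _ \<longleftrightarrow> (\<forall>q::'a poly. degree q > 0 \<longrightarrow> (\<exists>x. poly q x = 0))"

text \<open>C has basis x_0,...,x_{n-1}.  A linear map f : C \<otimes> C \<rightarrow> C is given by its
 structure constants: f(x_i \<otimes> x_j) = sum_{k<n} f i j k x_k.
 Delta(x_i) = sum_{s+t=i} x_s \<otimes> x_t, eps(x_i) = delta_{i0};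
 C \<otimes> C carries the tensor product coalgebra structure.\<close>

text \<open>f is a coalgebra morphism C \<otimes> C \<rightarrow> C:
 Delta(f(x_i \<otimes> x_j)) = (f \<otimes> f)(Delta(x_i \<otimes> x_j)) (compared coefficientwise at x_u \<otimes> x_v)
 and eps(f(x_i \<otimes> x_j)) = eps(x_i) eps(x_j).\<close>
definition coalg_mor :: "nat \<Rightarrow> (nat \<Rightarrow> nat \<Rightarrow> nat \<Rightarrow> 'a::field) \<Rightarrow> bool" where
  "coalg_mor n f \<longleftrightarrow>
     (\<forall>i<n. \<forall>j<n.
        (\<forall>u<n. \<forall>v<n.
           (if u + v < n then f i j (u + v) else 0) =
           (\<Sum>a\<le>i. \<Sum>c\<le>j. f a c u * f (i - a) (j - c) v))
      \<and> f i j 0 = (if i = 0 \<and> j = 0 then 1 else 0))"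

text \<open>Regular q-magma coalgebra: there exist coalgebra morphisms L (a \<otimes> b \<mapsto> a^b) and
 R (a \<otimes> b \<mapsto> a_b) with
   a^{b(1)} \<cdot> b(2) = (a \<cdot> b(1))^{b(2)} = eps(b) a,
   (a : b(2))_{b(1)} = a_{b(2)} : b(1) = eps(b) a,
 written out on basis elements a = x_i, b = x_j, coefficient of x_k.\<close>
definition regular_q_magma :: "nat \<Rightarrow> (nat \<Rightarrow> nat \<Rightarrow> nat \<Rightarrow> 'a::field) \<Rightarrow>
    (nat \<Rightarrow> nat \<Rightarrow> nat \<Rightarrow> 'a) \<Rightarrow> bool" where
  "regular_q_magma n p d \<longleftrightarrow> coalg_mor n p \<and> coalg_mor n d \<and>
    (\<exists>L R. coalg_mor n L \<and> coalg_mor n R \<and>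
      (\<forall>i<n. \<forall>j<n. \<forall>k<n.
        (\<Sum>s\<le>j. \<Sum>m<n. L i s m * p m (j - s) k) = (if j = 0 \<and> i = k then 1 else 0)
      \<and> (\<Sum>s\<le>j. \<Sum>m<n. p i s m * L m (j - s) k) = (if j = 0 \<and> i = k then 1 else 0)
      \<and> (\<Sum>s\<le>j. \<Sum>m<n. d i (j - s) m * R m s k) = (if j = 0 \<and> i = k then 1 else 0)
      \<and> (\<Sum>s\<le>j. \<Sum>m<n. R i (j - s) m * d m s k) = (if j = 0 \<and> i = k then 1 else 0)))"

text \<open>Regular q-cycle coalgebra: additionally identities (1)-(3), for a = x_i, b = x_j, c = x_l,
 coefficient of x_k (by multilinearity this is equivalent to all a, b, c).\<close>
definition regular_q_cycle :: "nat \<Rightarrow> (nat \<Rightarrow> nat \<Rightarrow> nat \<Rightarrow> 'a::field) \<Rightarrow>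
    (nat \<Rightarrow> nat \<Rightarrow> nat \<Rightarrow> 'a) \<Rightarrow> bool" where
  "regular_q_cycle n p d \<longleftrightarrow> regular_q_magma n p d \<and>
    (\<forall>i<n. \<forall>j<n. \<forall>l<n. \<forall>k<n.
      \<comment> \<open>(1) (a\<cdot>b(1))\<cdot>(c:b(2)) = (a\<cdot>c(2))\<cdot>(b\<cdot>c(1))\<close>
      (\<Sum>s\<le>j. \<Sum>m<n. \<Sum>r<n. p i s m * d l (j - s) r * p m r k) =
      (\<Sum>s\<le>l. \<Sum>m<n. \<Sum>r<n. p i (l - s) m * p j s r * p m r k)
    \<and> \<comment> \<open>(2) (a\<cdot>b(1)):(c\<cdot>b(2)) = (a:c(2))\<cdot>(b:c(1))\<close>
      (\<Sum>s\<le>j. \<Sum>m<n. \<Sum>r<n. p i s m * p l (j - s) r * d m r k) =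
      (\<Sum>s\<le>l. \<Sum>m<n. \<Sum>r<n. d i (l - s) m * d j s r * p m r k)
    \<and> \<comment> \<open>(3) (a:b(1)):(c:b(2)) = (a:c(2)):(b\<cdot>c(1))\<close>
      (\<Sum>s\<le>j. \<Sum>m<n. \<Sum>r<n. d i s m * d l (j - s) r * d m r k) =
      (\<Sum>s\<le>l. \<Sum>m<n. \<Sum>r<n. d i (l - s) m * p j s r * d m r k))"

end

(*
  Read dually, p and d are truncated power series P(u,v) and D(u,v) without constant term.
  The inverses required by regularity make their u-coefficients nonzero, and in
  characteristic 0 this forces both series to be divisible by u.  Identity (1), read at low
  indices, then gives P(u,0) = D(u,0) = u and d_11^1 = p_11^1.  From there the coefficients
  of v in P and D obey the same recursion, so everything reduces to d_b1^1 = p_b1^1, which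
  identity (2) yields because p_b1^b = b p_11^1 is nonzero.
*)

theory Submission
  imports Defs
begin

lemma sum_eq_single:
  assumes "finite S" "x \<in> S" "\<And>y. y \<in> S \<Longrightarrow> y \<noteq> x \<Longrightarrow> g y = 0"
  shows "sum g S = g x"
  using assms by (simp add: sum.remove sum.neutral)

text \<open>Dually, f is an algebra map K[y]/(y^n) \<rightarrow> K[u,v]/(u^n,v^n) sending y to
  F(u,v) = \<Sum> f a b 1 u^a v^b, and f a b m is the coefficient of u^a v^b in F^m.\<close>

locale coalgebra_morphism =
  fixes n :: nat and f :: "nat \<Rightarrow> nat \<Rightarrow> nat \<Rightarrow> 'a::field"
  assumes coalg_mor: "coalg_mor n f" and two_le_n: "2 \<le> n"
begin

lemma coeff_0: "i < n \<Longrightarrow> j < n \<Longrightarrow> f i j 0 = (if i = 0 \<and> j = 0 then 1 else 0)"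
  using coalg_mor unfolding coalg_mor_def by blast

lemma coeff_add:
  "i < n \<Longrightarrow> j < n \<Longrightarrow> u < n \<Longrightarrow> v < n \<Longrightarrow>
    (\<Sum>a\<le>i. \<Sum>c\<le>j. f a c u * f (i - a) (j - c) v) = (if u + v < n then f i j (u + v) else 0)"
  using coalg_mor unfolding coalg_mor_def by (simp only: eq_commute)

lemma coeff_Suc:
  "i < n \<Longrightarrow> j < n \<Longrightarrow> Suc m < n \<Longrightarrow>
    f i j (Suc m) = (\<Sum>a\<le>i. \<Sum>c\<le>j. f a c 1 * f (i - a) (j - c) m)"
  using coeff_add[of i j 1 m] two_le_n by simp

lemma coeff_power_n:
  "i < n \<Longrightarrow> j < n \<Longrightarrow> (\<Sum>a\<le>i. \<Sum>c\<le>j. f a c 1 * f (i - a) (j - c) (n - 1)) = 0"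
  using coeff_add[of i j 1 "n - 1"] two_le_n by simp

lemma constant_coeff: "f 0 0 1 = 0"
proof -
  have pow: "f 0 0 k = f 0 0 1 ^ k" if "k < n" for k
    using that
  proof (induction k)
    case (Suc k)
    then show ?case
      using coeff_Suc[of 0 0 k] by simp
  qed (simp add: coeff_0)
  have "f 0 0 1 * f 0 0 (n - 1) = 0"
    using coeff_power_n[of 0 0] two_le_n by simp
  then have "f 0 0 1 ^ Suc (n - 1) = 0"
    using pow[of "n - 1"] two_le_n by simp
  then show ?thesis
    by (metis power_eq_0_iff)
qed

lemma coeff_eq_0_below_weight:
  assumes F: "\<And>a b. a < n \<Longrightarrow> b < n \<Longrightarrow> A * a + B * b < T \<Longrightarrow> f a b 1 = 0"
  shows "a < n \<Longrightarrow> b < n \<Longrightarrow> m < n \<Longrightarrow> A * a + B * b < T * m \<Longrightarrow> f a b m = 0"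
proof (induction m arbitrary: a b)
  case (Suc m)
  have "f a' c 1 * f (a - a') (b - c) m = 0" if "a' \<le> a" "c \<le> b" for a' c
  proof (cases "A * a' + B * c < T")
    case True
    then show ?thesis using F[of a' c] that Suc.prems by simp
  next
    case False
    have "A * a' \<le> A * a" "B * c \<le> B * b"
      using that by simp_all
    then have "A * (a - a') + B * (b - c) < T * m"
      unfolding diff_mult_distrib2 using False Suc.prems(4) mult_Suc_right[of T m] by arith
    then show ?thesis using Suc.IH[of "a - a'" "b - c"] Suc.prems by simp
  qed
  then show ?case
    using coeff_Suc[of a b m] Suc.prems by (simp add: sum.neutral)
qed simp

lemma coeff_eq_0_below_degree: "a < n \<Longrightarrow> b < n \<Longrightarrow> m < n \<Longrightarrow> a + b < m \<Longrightarrow> f a b m = 0"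
  using coeff_eq_0_below_weight[of 1 1 1 a b m] constant_coeff by auto

lemma u_power_coeff: "m < n \<Longrightarrow> f m 0 m = f 1 0 1 ^ m"
proof (induction m)
  case (Suc m)
  have "f (Suc m) 0 (Suc m) = (\<Sum>a\<le>Suc m. f a 0 1 * f (Suc m - a) 0 m)"
    using coeff_Suc[of "Suc m" 0 m] Suc.prems by simp
  also have "\<dots> = f 1 0 1 * f (Suc m - 1) 0 m"
  proof (rule sum_eq_single)
    fix a assume "a \<in> {..Suc m}" "a \<noteq> 1"
    then consider "a = 0" | "Suc m - a + 0 < m" by fastforce
    then show "f a 0 1 * f (Suc m - a) 0 m = 0"
      by cases (use constant_coeff coeff_eq_0_below_degree Suc.prems in auto)
  qed auto
  finally show ?case using Suc by simp
qed (simp add: coeff_0)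

lemma sum_coeff_1_0_left: "(\<Sum>m<n. f 1 0 m * g m) = f 1 0 1 * g 1"
proof (subst sum_eq_single[of _ 1])
  fix m assume "m \<in> {..<n}" "m \<noteq> 1"
  then show "f 1 0 m * g m = 0"
    using coeff_0[of 1 0] coeff_eq_0_below_degree[of 1 0 m] two_le_n by (cases "m = 0") auto
qed (use two_le_n in auto)

lemma u_axis_identity_power:
  assumes axis: "\<And>a. a < n \<Longrightarrow> f a 0 1 = (if a = 1 then 1 else 0)"
  shows "a < n \<Longrightarrow> r < n \<Longrightarrow> f a 0 r = (if a = r then 1 else 0)"
proof (induction r arbitrary: a)
  case (Suc r)
  have "f a 0 (Suc r) = (\<Sum>a'\<le>a. f a' 0 1 * f (a - a') 0 r)"
    using coeff_Suc[of a 0 r] Suc.prems by simp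
  also have "\<dots> = (\<Sum>a'\<le>a. if a' = 1 then f (a - 1) 0 r else 0)"
    by (rule sum.cong) (use axis Suc.prems in auto)
  also have "\<dots> = (if a = Suc r then 1 else 0)"
    using Suc.IH[of "a - 1"] Suc.prems by auto
  finally show ?case .
qed (simp add: coeff_0)

lemma u_axis_power_gap:
  assumes u: "f 1 0 1 = 1" and gap: "\<And>a. 2 \<le> a \<Longrightarrow> a < t \<Longrightarrow> f a 0 1 = 0"
  shows "0 < r \<Longrightarrow> r < a \<Longrightarrow> a + 1 < r + t \<Longrightarrow> a < n \<Longrightarrow> f a 0 r = 0"
proof (induction r arbitrary: a)
  case (Suc r)
  show ?case
  proof (cases "r = 0")
    case True
    then show ?thesis using gap Suc.prems by simp
  next
    case False
    have "f a' 0 1 * f (a - a') 0 r = 0" if "a' \<le> a" for a'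
    proof -
      consider "a' = 0" | "a' = 1" | "2 \<le> a'" "a' < t" | "t \<le> a'" by linarith
      then show ?thesis
      proof cases
        case 2
        then show ?thesis using Suc.IH[of "a - 1"] Suc.prems False by simp
      next
        case 4
        then have "a - a' + 0 < r" using Suc.prems False by arith
        then show ?thesis using coeff_eq_0_below_degree[of "a - a'" 0 r] Suc.prems by simp
      qed (use constant_coeff gap in simp_all)
    qed
    then show ?thesis using coeff_Suc[of a 0 r] Suc.prems by (simp add: sum.neutral)
  qed
qed simp

lemma sum_u_axis_power_coeff:
  assumes u: "f 1 0 1 = 1" and t: "2 \<le> t" "t < n"
    and gap: "\<And>a. 2 \<le> a \<Longrightarrow> a < t \<Longrightarrow> f a 0 1 = 0"
  shows "(\<Sum>r<n. f t 0 r * g r) = f t 0 1 * g 1 + g t"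
proof -
  have coeff: "f t 0 r = (if r = 1 then f t 0 1 else if r = t then 1 else 0)" if "r < n" for r
  proof -
    from that consider "r = 0" | "r = 1" | "1 < r" "r < t" | "r = t" | "t < r" by linarith
    then show ?thesis
    proof cases
      case 3
      then show ?thesis using u_axis_power_gap[OF u gap, where r=r and a=t] t by simp
    next
      case 5
      then show ?thesis using coeff_eq_0_below_degree[of t 0 r] that t by simp
    qed (use t u u_power_coeff[of t] coeff_0 in simp_all)
  qed
  have "(\<Sum>r<n. f t 0 r * g r) = (\<Sum>r\<in>{1, t}. f t 0 r * g r)"
    by (rule sum.mono_neutral_right) (use t coeff in auto)
  then show ?thesis
    using t coeff[of t] by simp
qed

lemma v_coeff_Suc:
  assumes axis: "\<And>a r. a < n \<Longrightarrow> r < n \<Longrightarrow> f a 0 r = (if a = r then 1 else 0)"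
    and "Suc m < n" "b < n"
  shows "f b 1 (Suc m) =
    (if 0 < b then f (b - 1) 1 m else 0) + (if m \<le> b then f (b - m) 1 1 else 0)"
proof -
  have "f b 1 (Suc m) = (\<Sum>a\<le>b. f a 0 1 * f (b - a) 1 m) + (\<Sum>a\<le>b. f a 1 1 * f (b - a) 0 m)"
    using coeff_Suc[of b 1 m] assms two_le_n by (simp add: sum.distrib)
  also have "(\<Sum>a\<le>b. f a 0 1 * f (b - a) 1 m) = (\<Sum>a\<le>b. if a = 1 then f (b - 1) 1 m else 0)"
    by (rule sum.cong) (use axis assms two_le_n in auto)
  also have "(\<Sum>a\<le>b. f a 1 1 * f (b - a) 0 m) = (\<Sum>a\<le>b. if a = b - m \<and> m \<le> b then f (b - m) 1 1 else 0)"
    by (rule sum.cong) (use axis assms in auto)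
  finally show ?thesis by (simp add: sum.If_cases)
qed

lemma v_axis_convolution:
  assumes j: "0 < j" "j < n" and below: "\<And>b. b < j \<Longrightarrow> f 0 b 1 = 0" and k: "Suc k < n"
  shows "(\<Sum>a\<le>Suc k. \<Sum>c\<le>j. f a c 1 * f (Suc k - a) (j - c) (Suc k)) =
    f 1 0 1 * f k j (Suc k) + f 0 j 1 * f 1 0 1 ^ Suc k"
proof -
  have "f a b 1 = 0" if "j * a + b < j" for a b
  proof -
    have "a = 0" using that by (cases a) auto
    then show ?thesis using below that by simp
  qed
  then have weight: "f a b m = 0" if "a < n" "b < n" "m < n" "j * a + b < j * m" for a b m
    using coeff_eq_0_below_weight[of j 1 j a b m] that by simp
  let ?G = "\<lambda>a. \<Sum>c\<le>j. f a c 1 * f (Suc k - a) (j - c) (Suc k)"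
  have "?G a = 0" if "2 \<le> a" "a \<le> Suc k" for a
  proof (rule sum.neutral, intro ballI)
    fix c assume "c \<in> {..j}"
    have "j * (Suc k - a) \<le> j * (k - 1)"
      using that by (intro mult_le_mono2) simp
    moreover have "j * (k - 1) + j = j * Suc k - j" "j \<le> j * Suc k"
      using that by (simp_all add: algebra_simps)
    ultimately have "j * (Suc k - a) + (j - c) < j * Suc k"
      using j(1) by linarith
    then show "f a c 1 * f (Suc k - a) (j - c) (Suc k) = 0"
      using weight[of "Suc k - a" "j - c" "Suc k"] j k by simp
  qed
  then have "sum ?G {..Suc k} = sum ?G {0, 1}"
    by (intro sum.mono_neutral_right) auto
  then have "sum ?G {..Suc k} = ?G 0 + ?G 1"
    by simp
  moreover have "?G 0 = f 0 j 1 * f (Suc k) 0 (Suc k)"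
    by (subst sum_eq_single[of _ j]) (use below in auto)
  moreover have "?G 1 = f 1 0 1 * f k j (Suc k)"
  proof (subst sum_eq_single[of _ 0])
    fix c assume "c \<in> {..j}" "c \<noteq> 0"
    then have "j * k + (j - c) < j * Suc k" by simp
    then show "f 1 c 1 * f (Suc k - 1) (j - c) (Suc k) = 0"
      using weight[of k "j - c" "Suc k"] j k by simp
  qed auto
  ultimately show ?thesis
    using u_power_coeff[OF k] by (simp add: add.commute)
qed

end

locale coalgebra_morphism_char_0 = coalgebra_morphism n f
  for n and f :: "nat \<Rightarrow> nat \<Rightarrow> nat \<Rightarrow> 'a::field_char_0" +
  assumes u_coeff_nonzero: "f 1 0 1 \<noteq> 0"
begin

text \<open>If \<gamma> = f 0 j 1 is the first nonzero coefficient on the v-axis, the coefficient of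
  u^k v^j in F^(k+1) is (k+1) \<alpha>^k \<gamma> with \<alpha> = f 1 0 1; since F^n = 0, n \<alpha>^(n-1) \<gamma> = 0.\<close>

lemma v_axis_coeff: "j < n \<Longrightarrow> f 0 j 1 = 0"
proof (induction j rule: less_induct)
  case (less j)
  show ?case
  proof (cases "j = 0")
    case True
    then show ?thesis using constant_coeff by simp
  next
    case False
    have below: "f 0 b 1 = 0" if "b < j" for b
      using less that by simp
    note convolution = v_axis_convolution[OF _ less.prems below]
    have power: "f k j (Suc k) = of_nat (Suc k) * f 1 0 1 ^ k * f 0 j 1" if "Suc k < n" for k
      using that
    proof (induction k)
      case (Suc k)
      then show ?case
        using coeff_Suc[of "Suc k" j "Suc k"] convolution[of k] False less.prems
        by (simp add: algebra_simps)
    qed simp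
    obtain k where k: "n = Suc (Suc k)"
      using two_le_n by (metis add_2_eq_Suc le_Suc_ex)
    have "0 = f 1 0 1 * f k j (Suc k) + f 0 j 1 * f 1 0 1 ^ Suc k"
      using coeff_power_n[of "Suc k" j] convolution[of k] False less.prems k by simp
    also have "\<dots> = of_nat n * f 1 0 1 ^ Suc k * f 0 j 1"
      using power[of k] k by (simp add: algebra_simps)
    finally show ?thesis
      using u_coeff_nonzero two_le_n by simp
  qed
qed

lemma coeff_eq_0_below_u_degree: "a < n \<Longrightarrow> b < n \<Longrightarrow> m < n \<Longrightarrow> a < m \<Longrightarrow> f a b m = 0"
  using coeff_eq_0_below_weight[of 1 0 1 a b m] v_axis_coeff by auto

lemma sum_coeff_0_left: "b < n \<Longrightarrow> (\<Sum>m<n. f 0 b m * g m) = (if b = 0 then g 0 else 0)"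
  by (subst sum_eq_single[of _ 0]) (auto simp: coeff_0 coeff_eq_0_below_u_degree)

lemma sum_coeff_1_left: "b < n \<Longrightarrow> (\<Sum>m<n. f 1 b m * g m) = f 1 b 1 * g 1"
proof (subst sum_eq_single[of _ 1])
  fix m assume "m \<in> {..<n}" "m \<noteq> 1" "b < n"
  then show "f 1 b m * g m = 0"
    using coeff_0[of 1 b] coeff_eq_0_below_u_degree[of 1 b m] two_le_n by (cases "m = 0") auto
qed (use two_le_n in auto)

end

text \<open>Otherwise the simplifier rewrites the index 1 of terms like p 1 r 1 to Suc 0 under
  binders, and the lemmas above stated with 1 no longer apply.\<close>

declare One_nat_def [simp del]

lemma atMost_1: "{..1::nat} = {0, 1}"
  by auto

locale regular_q_cycle_coalgebra =
  fixes n :: nat and p d :: "nat \<Rightarrow> nat \<Rightarrow> nat \<Rightarrow> 'a::field_char_0"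
  assumes regular: "regular_q_cycle n p d" and two_le_n: "2 \<le> n" and p_uv_coeff_nonzero: "p 1 1 1 \<noteq> 0"
begin

sublocale P: coalgebra_morphism n p
  using regular two_le_n unfolding regular_q_cycle_def regular_q_magma_def
  by unfold_locales auto

sublocale D: coalgebra_morphism n d
  using regular two_le_n unfolding regular_q_cycle_def regular_q_magma_def
  by unfold_locales auto

lemma u_coeffs_nonzero: "p 1 0 1 \<noteq> 0" "d 1 0 1 \<noteq> 0"
proof -
  obtain L R where "coalg_mor n L" and inverse:
    "\<forall>i<n. \<forall>j<n. \<forall>k<n.
        (\<Sum>s\<le>j. \<Sum>m<n. L i s m * p m (j - s) k) = (if j = 0 \<and> i = k then 1 else 0)
      \<and> (\<Sum>s\<le>j. \<Sum>m<n. p i s m * L m (j - s) k) = (if j = 0 \<and> i = k then 1 else 0)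
      \<and> (\<Sum>s\<le>j. \<Sum>m<n. d i (j - s) m * R m s k) = (if j = 0 \<and> i = k then 1 else 0)
      \<and> (\<Sum>s\<le>j. \<Sum>m<n. R i (j - s) m * d m s k) = (if j = 0 \<and> i = k then 1 else 0)"
    using regular unfolding regular_q_cycle_def regular_q_magma_def by blast
  moreover have "(\<Sum>m<n. L 1 0 m * p m 0 1) = 1" "(\<Sum>m<n. d 1 0 m * R m 0 1) = 1"
    using inverse[rule_format, of 1 0 1] two_le_n by simp_all
  ultimately have "L 1 0 1 * p 1 0 1 = 1" "d 1 0 1 * R 1 0 1 = 1"
    using coalgebra_morphism.sum_coeff_1_0_left[of n L] D.sum_coeff_1_0_left two_le_n
    by (simp_all add: coalgebra_morphism_def)
  then show "p 1 0 1 \<noteq> 0" "d 1 0 1 \<noteq> 0"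
    by auto
qed

sublocale P: coalgebra_morphism_char_0 n p
  using u_coeffs_nonzero by unfold_locales

sublocale D: coalgebra_morphism_char_0 n d
  using u_coeffs_nonzero by unfold_locales

lemma cycle_1_coeff:
  assumes "j < n" "l < n"
  shows "(\<Sum>s\<le>j. p 1 s 1 * (\<Sum>r<n. d l (j - s) r * p 1 r 1)) =
    (\<Sum>s\<le>l. p 1 (l - s) 1 * (\<Sum>r<n. p j s r * p 1 r 1))"
proof -
  have "(\<Sum>s\<le>j. \<Sum>m<n. \<Sum>r<n. p 1 s m * d l (j - s) r * p m r 1) =
      (\<Sum>s\<le>l. \<Sum>m<n. \<Sum>r<n. p 1 (l - s) m * p j s r * p m r 1)"
    using regular assms two_le_n unfolding regular_q_cycle_def by auto
  then have "(\<Sum>s\<le>j. \<Sum>m<n. p 1 s m * (\<Sum>r<n. d l (j - s) r * p m r 1)) =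
      (\<Sum>s\<le>l. \<Sum>m<n. p 1 (l - s) m * (\<Sum>r<n. p j s r * p m r 1))"
    by (simp only: mult.assoc sum_distrib_left)
  then show ?thesis
    using assms by (simp add: P.sum_coeff_1_left)
qed

lemma u_coeffs_eq_1: "p 1 0 1 = 1" "d 1 0 1 = 1"
proof -
  have "p 1 1 1 * p 1 0 1 = p 1 0 1 * (p 1 0 1 * p 1 1 1)"
    using cycle_1_coeff[of 1 0] two_le_n
    by (simp add: atMost_1 D.sum_coeff_0_left P.sum_coeff_1_left)
  then show p: "p 1 0 1 = 1"
    using p_uv_coeff_nonzero u_coeffs_nonzero by simp
  have "p 1 0 1 * (d 1 0 1 * p 1 1 1) = p 1 1 1 * p 1 0 1"
    using cycle_1_coeff[of 0 1] two_le_n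
    by (simp add: atMost_1 P.sum_coeff_0_left D.sum_coeff_1_left P.sum_coeff_1_left)
  then show "d 1 0 1 = 1"
    using p_uv_coeff_nonzero p by simp
qed

lemma p_u_axis_coeff: "2 \<le> t \<Longrightarrow> t < n \<Longrightarrow> p t 0 1 = 0"
proof (induction t rule: less_induct)
  case (less t)
  have gap: "p a 0 1 = 0" if "2 \<le> a" "a < t" for a
    using less that by simp
  have "(\<Sum>s\<le>t. p 1 s 1 * (\<Sum>r<n. d 0 (t - s) r * p 1 r 1)) = (\<Sum>s\<le>t. if s = t then p 1 t 1 else 0)"
    by (rule sum.cong) (use less.prems u_coeffs_eq_1 in \<open>auto simp: D.sum_coeff_0_left\<close>)
  then have "p 1 t 1 = p t 0 1 * p 1 1 1 + p 1 t 1"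
    using cycle_1_coeff[of t 0] less.prems u_coeffs_eq_1
      P.sum_u_axis_power_coeff[OF u_coeffs_eq_1(1) less.prems gap] by simp
  then show ?case
    using p_uv_coeff_nonzero by simp
qed

lemma d_u_axis_coeff: "2 \<le> t \<Longrightarrow> t < n \<Longrightarrow> d t 0 1 = 0"
proof (induction t rule: less_induct)
  case (less t)
  have gap: "d a 0 1 = 0" if "2 \<le> a" "a < t" for a
    using less that by simp
  have "(\<Sum>s\<le>t. p 1 (t - s) 1 * (\<Sum>r<n. p 0 s r * p 1 r 1)) = (\<Sum>s\<le>t. if s = 0 then p 1 t 1 else 0)"
    by (rule sum.cong) (use less.prems u_coeffs_eq_1 in \<open>auto simp: P.sum_coeff_0_left\<close>)
  then have "d t 0 1 * p 1 1 1 + p 1 t 1 = p 1 t 1"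
    using cycle_1_coeff[of 0 t] less.prems u_coeffs_eq_1
      D.sum_u_axis_power_coeff[OF u_coeffs_eq_1(2) less.prems gap] by simp
  then show ?case
    using p_uv_coeff_nonzero by simp
qed

lemma u_axis_coeffs:
  assumes "a < n" "r < n"
  shows "p a 0 r = (if a = r then 1 else 0)" "d a 0 r = (if a = r then 1 else 0)"
proof -
  have "p a 0 1 = (if a = 1 then 1 else 0) \<and> d a 0 1 = (if a = 1 then 1 else 0)" if "a < n" for a
  proof -
    consider "a = 0" | "a = 1" | "2 \<le> a" by linarith
    then show ?thesis
      by cases (use that P.constant_coeff D.constant_coeff u_coeffs_eq_1 p_u_axis_coeff d_u_axis_coeff
        in simp_all)
  qed
  then show "p a 0 r = (if a = r then 1 else 0)" "d a 0 r = (if a = r then 1 else 0)"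
    using P.u_axis_identity_power[of a r] D.u_axis_identity_power[of a r] assms by simp_all
qed

lemma sum_u_axis_coeffs_left:
  assumes "a < n"
  shows "(\<Sum>m<n. p a 0 m * g m) = g a" "(\<Sum>m<n. d a 0 m * g m) = g a"
  using assms by (subst sum_eq_single[of _ a]; auto simp: u_axis_coeffs)+

lemma d_uv_coeff: "d 1 1 1 = p 1 1 1"
proof -
  have "d 1 1 1 * p 1 1 1 + p 1 1 1 * p 1 1 1 = p 1 1 1 * p 1 1 1 + p 1 1 1 * p 1 1 1"
    using cycle_1_coeff[of 1 1] two_le_n u_coeffs_eq_1
    by (simp add: atMost_1 D.sum_coeff_1_left P.sum_coeff_1_left)
  then show ?thesis
    using p_uv_coeff_nonzero by simp
qed

lemma cycle_2_v_coeff: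
  assumes "b < n"
  shows "p 1 1 1 * d b 1 1 + (\<Sum>m<n. p b 1 m * d m 1 1) =
    (\<Sum>m<n. d b 1 m * p m 1 1) + p 1 1 1 * p b 1 1"
proof -
  have "(\<Sum>s\<le>1. \<Sum>m<n. \<Sum>r<n. p b s m * p 1 (1 - s) r * d m r 1) =
      (\<Sum>s\<le>1. \<Sum>m<n. \<Sum>r<n. d b (1 - s) m * d 1 s r * p m r 1)"
    using regular assms two_le_n unfolding regular_q_cycle_def by auto
  then have "(\<Sum>s\<le>1. \<Sum>m<n. p b s m * (\<Sum>r<n. p 1 (1 - s) r * d m r 1)) =
      (\<Sum>s\<le>1. \<Sum>m<n. d b (1 - s) m * (\<Sum>r<n. d 1 s r * p m r 1))"
    by (simp only: mult.assoc sum_distrib_left)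
  then show ?thesis
    using assms two_le_n u_coeffs_eq_1 d_uv_coeff
    by (simp add: atMost_1 P.sum_coeff_1_left D.sum_coeff_1_left sum_u_axis_coeffs_left)
qed

lemmas p_v_coeff_Suc = P.v_coeff_Suc[OF u_axis_coeffs(1)]
lemmas d_v_coeff_Suc = D.v_coeff_Suc[OF u_axis_coeffs(2)]

lemma p_v_coeff_diag: "0 < b \<Longrightarrow> b < n \<Longrightarrow> p b 1 b = of_nat b * p 1 1 1"
proof (induction b)
  case (Suc b)
  show ?case
  proof (cases "b = 0")
    case False
    then have "p (Suc b) 1 (Suc b) = p b 1 b + p 1 1 1"
      using p_v_coeff_Suc[of b "Suc b"] Suc.prems by (simp add: One_nat_def[symmetric])
    then show ?thesis
      using Suc False by (simp add: algebra_simps)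
  qed (simp add: One_nat_def)
qed simp

text \<open>Identity (2) at (x_b, x_1, x_1): the terms with m \<notin> {1, b} cancel, leaving
  p b 1 b (d b 1 1 - p b 1 1) = 0.\<close>

lemma d_v_coeff_1_step:
  assumes b: "2 \<le> b" "b < n"
    and smaller: "\<And>a. a < b \<Longrightarrow> d a 1 1 = p a 1 1"
    and higher: "\<And>m. 2 \<le> m \<Longrightarrow> m < n \<Longrightarrow> d b 1 m = p b 1 m"
  shows "d b 1 1 = p b 1 1"
proof -
  define \<Delta> where "\<Delta> m = p b 1 m * d m 1 1 - d b 1 m * p m 1 1" for m
  have "\<Delta> m = 0" if m: "m < n" "m \<noteq> 1" "m \<noteq> b" for m
  proof -
    have "m = 0 \<or> 2 \<le> m \<and> m < b \<or> b < m"
      using m by presburger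
    then consider "m = 0" | "2 \<le> m" "m < b" | "b < m"
      by blast
    then show ?thesis
    proof cases
      case 1
      then show ?thesis using P.coeff_0[of b 1] D.coeff_0[of b 1] b two_le_n by (simp add: \<Delta>_def)
    next
      case 2
      then show ?thesis using smaller higher m by (simp add: \<Delta>_def)
    next
      case 3
      then show ?thesis
        using P.coeff_eq_0_below_u_degree[of b 1 m] D.coeff_eq_0_below_u_degree[of b 1 m] b m two_le_n
        by (simp add: \<Delta>_def)
    qed
  qed
  then have "(\<Sum>m<n. \<Delta> m) = (\<Sum>m\<in>{1, b}. \<Delta> m)"
    by (intro sum.mono_neutral_right) (use b in auto)
  also have "\<dots> = p 1 1 1 * (p b 1 1 - d b 1 1) + p b 1 b * (d b 1 1 - p b 1 1)"
    using b d_uv_coeff higher[of b] by (simp add: \<Delta>_def algebra_simps)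
  finally have "(\<Sum>m<n. \<Delta> m) = p 1 1 1 * (p b 1 1 - d b 1 1) + p b 1 b * (d b 1 1 - p b 1 1)" .
  moreover have "(\<Sum>m<n. \<Delta> m) = p 1 1 1 * (p b 1 1 - d b 1 1)"
    using cycle_2_v_coeff[OF b(2)] by (simp add: \<Delta>_def sum_subtractf algebra_simps)
  ultimately have "p b 1 b * (d b 1 1 - p b 1 1) = 0"
    by simp
  then show ?thesis
    using p_v_coeff_diag[of b] b p_uv_coeff_nonzero by simp
qed

lemma v_coeffs_eq: "b < n \<Longrightarrow> m < n \<Longrightarrow> d b 1 m = p b 1 m"
proof (induction b arbitrary: m rule: less_induct)
  case (less b)
  have succ: "d b 1 (Suc k) = p b 1 (Suc k)" if "0 < k" "Suc k < n" for k
    using p_v_coeff_Suc[of k b] d_v_coeff_Suc[of k b] less.IH[of "b - 1" k] less.IH[of "b - k" 1]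
      less.prems(1) that
    by auto
  have higher: "d b 1 m = p b 1 m" if "2 \<le> m" "m < n" for m
    using succ[of "m - 1"] that by (simp add: Suc_diff_Suc)
  consider "m = 0" | "m = 1" "b \<le> 1" | "m = 1" "2 \<le> b" | "2 \<le> m"
    by linarith
  then show ?case
  proof cases
    case 1
    then show ?thesis using P.coeff_0 D.coeff_0 less.prems two_le_n by simp
  next
    case 2
    then have "b = 0 \<or> b = 1"
      by linarith
    then show ?thesis
      using 2 P.v_axis_coeff[of 1] D.v_axis_coeff[of 1] d_uv_coeff two_le_n by auto
  next
    case 3
    then show ?thesis
      using d_v_coeff_1_step less.IH higher less.prems two_le_n by auto
  qed (use higher less.prems in simp)
qed

end

theorem proposition4p2:
  fixes n :: nat
    and p d :: "nat \<Rightarrow> nat \<Rightarrow> nat \<Rightarrow> 'a::field_char_0"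
  assumes "alg_closed TYPE('a)"
    and "n \<ge> 2"
    and "regular_q_cycle n p d"
    and "p 1 1 1 \<noteq> 0"
  shows "\<forall>b<n. \<forall>c<n. d b 1 c = p b 1 c"
proof -
  interpret regular_q_cycle_coalgebra n p d
    using assms(2-4) by unfold_locales
  show ?thesis
    using v_coeffs_eq by blast
qed

end
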